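(* For every $m\in\mathbb{Z}_{>0}$, $\alpha(-1)F^m\in C_2(V_L^+)$.
   Context: $L=\mathbb{Z}\alpha$, $\langle\alpha,\alpha\rangle=2k$; $V_L=M(1)\otimes\mathbb{C}[L]$ the lattice VOA, $V_L^+$ the fixed points of the involution $\theta$ lifted from $-1$ on $L$. $F^m=e^{m\alpha}-e^{-m\alpha}$. $C_2(V)$ is the span of $\{v_{-2}u:u,v\in V\}$. *)

theory Defs
  imports Complex_Main "HOL-Library.Multiset"
begin

text \<open>Concrete model of the rank-one lattice VOA V_L, L = Z alpha, (alpha,alpha) = 2k.
  Basis of V_L = M(1) (x) C[L]: pairs (mu, r) with mu a multiset of positive naturals,
  standing for  alpha(-mu_1) ... alpha(-mu_t) e^{r alpha}.  Vectors are coefficient functions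
  (finite support is imposed in VL).  The 2-cocycle is taken trivial (legitimate because
  (beta,gamma) is even for all beta, gamma in L).\<close>

type_synonym basis = "nat multiset \<times> int"
type_synonym vec = "basis \<Rightarrow> complex"

definition vzero :: vec where "vzero = (\<lambda>_. 0)"
definition bv :: "basis \<Rightarrow> vec" where "bv b = (\<lambda>c. if c = b then 1 else 0)"
definition vadd :: "vec \<Rightarrow> vec \<Rightarrow> vec" where "vadd u v = (\<lambda>c. u c + v c)"
definition vsmult :: "complex \<Rightarrow> vec \<Rightarrow> vec" where "vsmult a v = (\<lambda>c. a * v c)"
definition vsum :: "('i \<Rightarrow> vec) \<Rightarrow> 'i set \<Rightarrow> vec" where
  "vsum T I = (\<lambda>c. \<Sum>i\<in>I. T i c)"
definition supp :: "vec \<Rightarrow> basis set" where "supp v = {b. v b \<noteq> 0}"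

definition lin :: "(basis \<Rightarrow> vec) \<Rightarrow> vec \<Rightarrow> vec" where
  "lin f v = (\<lambda>c. \<Sum>b\<in>supp v. v b * f b c)"

definition fsum :: "('i \<Rightarrow> vec) \<Rightarrow> 'i set \<Rightarrow> vec" where
  "fsum T I = vsum T {i\<in>I. T i \<noteq> vzero}"

text \<open>Heisenberg modes alpha(n):  [alpha(m),alpha(n)] = 2k m delta_{m+n,0}, alpha(0) e^{r alpha} = 2kr e^{r alpha}.\<close>
fun hb :: "nat \<Rightarrow> int \<Rightarrow> basis \<Rightarrow> vec" where
  "hb k n (mu, r) =
     (if n < 0 then bv (mu + {#nat (-n)#}, r)
      else if n = 0 then vsmult (of_int (2 * int k * r)) (bv (mu, r))
      else vsmult (of_nat (nat n * 2 * k * count mu (nat n))) (bv (mu - {#nat n#}, r)))"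

definition hmode :: "nat \<Rightarrow> int \<Rightarrow> vec \<Rightarrow> vec" where
  "hmode k n = lin (hb k n)"

definition hprod :: "nat \<Rightarrow> int list \<Rightarrow> vec \<Rightarrow> vec" where
  "hprod k ns v = foldr (hmode k) ns v"

text \<open>Partitions of j and coefficients of exp(sum_n x_n z^n / n).\<close>
definition parts :: "nat \<Rightarrow> nat multiset set" where
  "parts j = {mu. set_mset mu \<subseteq> {1..j} \<and> sum_mset mu = j}"

definition pcoef :: "nat multiset \<Rightarrow> complex" where
  "pcoef mu = (\<Prod>n\<in>set_mset mu. 1 / (of_nat n ^ count mu n * fact (count mu n)))"

text \<open>z^i coefficient of E^-(-beta,z) and z^{-j} coefficient of E^+(-beta,z), beta = s alpha.\<close>
definition Sminus :: "nat \<Rightarrow> int \<Rightarrow> nat \<Rightarrow> vec \<Rightarrow> vec" where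
  "Sminus k s i v = vsum (\<lambda>mu. vsmult (of_int s ^ size mu * pcoef mu)
       (hprod k (map (\<lambda>n. - int n) (sorted_list_of_multiset mu)) v)) (parts i)"

definition Splus :: "nat \<Rightarrow> int \<Rightarrow> nat \<Rightarrow> vec \<Rightarrow> vec" where
  "Splus k s j v = vsum (\<lambda>mu. vsmult (of_int (- s) ^ size mu * pcoef mu)
       (hprod k (map int (sorted_list_of_multiset mu)) v)) (parts j)"

text \<open>Modes of e^{s alpha}:  Y(e^beta,z) = E^-(-beta,z) E^+(-beta,z) e_beta z^{beta(0)} = sum_n (e^beta)_n z^{-n-1}.\<close>
fun emode_b :: "nat \<Rightarrow> int \<Rightarrow> int \<Rightarrow> basis \<Rightarrow> vec" where
  "emode_b k s n (mu, r) =
     vsum (\<lambda>j. let i = int j - 2 * int k * s * r - n - 1 in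
                 if i \<ge> 0 then Sminus k s (nat i) (Splus k s j (bv (mu, r + s))) else vzero)
          {0..sum_mset mu}"

definition emode :: "nat \<Rightarrow> int \<Rightarrow> int \<Rightarrow> vec \<Rightarrow> vec" where
  "emode k s n = lin (emode_b k s n)"

definition gbin :: "int \<Rightarrow> nat \<Rightarrow> complex" where
  "gbin m p = (of_int (- m - 1) gchoose (p - 1))"

text \<open>Modes of alpha(-p_1)...alpha(-p_t) e^{s alpha}, via
  Y(alpha(-p)v,z) = :(d^{(p-1)} alpha(z)) Y(v,z):, i.e.
  (alpha(-p)v)_n = sum_{m<0} C(-m-1,p-1) alpha(m) v_{n-m-p} + sum_{m>=0} C(-m-1,p-1) v_{n-m-p} alpha(m).\<close>
fun vml :: "nat \<Rightarrow> nat list \<Rightarrow> int \<Rightarrow> int \<Rightarrow> vec \<Rightarrow> vec" where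
  "vml k [] s n w = emode k s n w"
| "vml k (p # ps) s n w =
     vadd (fsum (\<lambda>m. vsmult (gbin m p) (hmode k m (vml k ps s (n - m - int p) w))) {m. m < 0})
          (fsum (\<lambda>m. vsmult (gbin m p) (vml k ps s (n - m - int p) (hmode k m w))) {m. m \<ge> 0})"

text \<open>The vertex operator mode v_n u, Y(v,z) = sum_n v_n z^{-n-1}, extended linearly in v.\<close>
definition vmode :: "nat \<Rightarrow> vec \<Rightarrow> int \<Rightarrow> vec \<Rightarrow> vec" where
  "vmode k v n u = (\<lambda>c. \<Sum>b\<in>supp v. v b * vml k (sorted_list_of_multiset (fst b)) (snd b) n u c)"

definition VL :: "vec set" where
  "VL = {v. finite (supp v) \<and> (\<forall>b\<in>supp v. 0 \<notin># fst b)}"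

definition theta :: "vec \<Rightarrow> vec" where
  "theta v = (\<lambda>(mu, r). (-1) ^ size mu * v (mu, - r))"

definition VLplus :: "vec set" where
  "VLplus = {v \<in> VL. theta v = v}"

inductive_set cspan :: "vec set \<Rightarrow> vec set" for S where
  zero: "vzero \<in> cspan S"
| add: "x \<in> S \<Longrightarrow> y \<in> cspan S \<Longrightarrow> vadd (vsmult a x) y \<in> cspan S"

definition C2 :: "nat \<Rightarrow> vec set \<Rightarrow> vec set" where
  "C2 k V = cspan {vmode k v (-2) u | u v. u \<in> V \<and> v \<in> V}"

definition F :: "int \<Rightarrow> vec" where
  "F m = vadd (bv ({#}, m)) (vsmult (-1) (bv ({#}, - m)))"

end

theory Submission
  imports Defs
begin

text \<open>Since \<open>Y(e^\<beta>, z) 1 = E^-(-\<beta>, z) e^\<beta>\<close>, the coefficient of \<open>z^1\<close> gives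
  \<open>e^\<beta>_(-2) 1 = \<beta>(-1) e^\<beta>\<close>. Both the vacuum and \<open>E^m = e^(m\<alpha>) + e^(-m\<alpha>)\<close> lie in \<open>V_L^+\<close>,
  and by linearity \<open>E^m_(-2) 1 = m \<alpha>(-1) F^m\<close>; so for \<open>m \<noteq> 0\<close> the vector \<open>\<alpha>(-1) F^m\<close> is a
  multiple of a generator of \<open>C_2(V_L^+)\<close>.\<close>

definition vacuum :: vec where
  "vacuum = bv ({#}, 0)"

definition E :: "int \<Rightarrow> vec" where
  "E m = vadd (bv ({#}, m)) (bv ({#}, - m))"

lemma supp_bv [simp]: "supp (bv b) = {b}"
  by (auto simp: supp_def bv_def)

lemma supp_vadd: "supp (vadd u v) \<subseteq> supp u \<union> supp v"
  by (auto simp: supp_def vadd_def)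

lemma supp_vsmult: "supp (vsmult a v) \<subseteq> supp v"
  by (auto simp: supp_def vsmult_def)

lemma finite_supp_vsmult: "finite (supp v) \<Longrightarrow> finite (supp (vsmult a v))"
  by (meson finite_subset supp_vsmult)

lemma lin_eq_sum_superset:
  assumes "finite S" "supp v \<subseteq> S"
  shows "lin f v c = (\<Sum>b\<in>S. v b * f b c)"
  unfolding lin_def using assms by (intro sum.mono_neutral_left) (auto simp: supp_def)

lemma lin_bv: "lin f (bv b) = f b"
  unfolding lin_def supp_bv by (rule ext) (simp add: bv_def)

lemma lin_vadd:
  assumes "finite (supp u)" "finite (supp v)"
  shows "lin f (vadd u v) = vadd (lin f u) (lin f v)"
proof (rule ext)
  fix c
  let ?S = "supp u \<union> supp v"
  have "lin f (vadd u v) c = (\<Sum>b\<in>?S. (u b + v b) * f b c)"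
    using assms supp_vadd by (subst lin_eq_sum_superset[of ?S]) (auto simp: vadd_def)
  also have "\<dots> = (\<Sum>b\<in>?S. u b * f b c) + (\<Sum>b\<in>?S. v b * f b c)"
    by (simp add: distrib_right sum.distrib)
  also have "\<dots> = lin f u c + lin f v c"
    using assms by (simp add: lin_eq_sum_superset[of ?S])
  finally show "lin f (vadd u v) c = vadd (lin f u) (lin f v) c"
    by (simp add: vadd_def)
qed

lemma lin_vsmult:
  assumes "finite (supp v)"
  shows "lin f (vsmult a v) = vsmult a (lin f v)"
proof (rule ext)
  fix c
  have "lin f (vsmult a v) c = (\<Sum>b\<in>supp v. a * v b * f b c)"
    using assms supp_vsmult by (subst lin_eq_sum_superset[of "supp v"]) (auto simp: vsmult_def)
  then show "lin f (vsmult a v) c = vsmult a (lin f v) c"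
    by (simp add: lin_def vsmult_def sum_distrib_left mult.assoc)
qed

lemma vmode_eq_lin:
  "vmode k v n u = lin (\<lambda>b. vml k (sorted_list_of_multiset (fst b)) (snd b) n u) v"
  by (simp add: vmode_def lin_def)

lemma parts_0: "parts 0 = {{#}}"
  by (auto simp: parts_def)

lemma parts_1: "parts 1 = {{#1#}}"
proof (intro equalityI subsetI)
  fix mu assume "mu \<in> parts 1"
  then have "set_mset mu \<subseteq> {1}" and sum: "sum_mset mu = 1"
    by (auto simp: parts_def)
  then have "mu = replicate_mset (count mu 1) 1"
    by (intro multiset_eqI) (auto simp: count_eq_zero_iff)
  then obtain n where mu: "mu = replicate_mset n 1"
    by blast
  with sum have "n = 1" by simp
  with mu show "mu \<in> {{#1#}}" by simp
qed (auto simp: parts_def)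

lemma Splus_0: "Splus k s 0 v = v"
  by (rule ext) (simp add: Splus_def parts_0 pcoef_def vsum_def vsmult_def hprod_def)

lemma Sminus_1: "Sminus k s 1 v = vsmult (of_int s) (hmode k (-1) v)"
  unfolding Sminus_def parts_1
  by (rule ext) (simp add: pcoef_def vsum_def vsmult_def hprod_def)

lemma emode_neg2_vacuum:
  "emode k s (-2) vacuum = vsmult (of_int s) (hmode k (-1) (bv ({#}, s)))"
proof -
  have "emode k s (-2) vacuum = Sminus k s 1 (Splus k s 0 (bv ({#}, s)))"
    by (rule ext) (simp add: emode_def vacuum_def lin_bv vsum_def)
  then show ?thesis
    unfolding Splus_0 Sminus_1 .
qed

lemma E_mode_neg2_vacuum:
  "vmode k (E m) (-2) vacuum = vsmult (of_int m) (hmode k (-1) (F m))"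
proof -
  have "vmode k (E m) (-2) vacuum =
      vadd (vsmult (of_int m) (hmode k (-1) (bv ({#}, m))))
           (vsmult (of_int (- m)) (hmode k (-1) (bv ({#}, - m))))"
    by (simp add: vmode_eq_lin E_def lin_vadd lin_bv emode_neg2_vacuum)
  moreover have "hmode k (-1) (F m) =
      vadd (hmode k (-1) (bv ({#}, m))) (vsmult (-1) (hmode k (-1) (bv ({#}, - m))))"
    by (simp add: hmode_def F_def lin_vadd lin_vsmult finite_supp_vsmult lin_bv)
  ultimately show ?thesis
    by (auto simp: vadd_def vsmult_def algebra_simps)
qed

lemma theta_bv: "theta (bv (mu, r)) = vsmult ((-1) ^ size mu) (bv (mu, - r))"
  by (auto simp: theta_def bv_def vsmult_def)

lemma theta_vadd: "theta (vadd u v) = vadd (theta u) (theta v)"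
  by (auto simp: theta_def vadd_def distrib_left)

lemma vacuum_in_VLplus: "vacuum \<in> VLplus"
  by (simp add: VLplus_def VL_def vacuum_def theta_bv vsmult_def)

lemma E_in_VLplus: "E m \<in> VLplus"
proof -
  have "theta (E m) = E m"
    unfolding E_def theta_vadd theta_bv by (auto simp: vadd_def vsmult_def)
  moreover have "supp (E m) \<subseteq> {({#}, m), ({#}, - m)}"
    unfolding E_def using supp_vadd[of "bv ({#}, m)" "bv ({#}, - m)"] by auto
  ultimately show ?thesis
    unfolding VLplus_def VL_def by (auto dest: finite_subset)
qed

lemma smult_vmode_neg2_in_C2:
  assumes "u \<in> V" "v \<in> V"
  shows "vsmult a (vmode k v (-2) u) \<in> C2 k V"
proof -
  have "vadd (vsmult a (vmode k v (-2) u)) vzero \<in> C2 k V"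
    unfolding C2_def using assms by (blast intro: cspan.add cspan.zero)
  moreover have "vadd (vsmult a (vmode k v (-2) u)) vzero = vsmult a (vmode k v (-2) u)"
    by (simp add: vadd_def vzero_def)
  ultimately show ?thesis by simp
qed

theorem lemma4p6:
  fixes k :: nat and m :: int
  assumes "k > 0" and "m > 0"
  shows "hmode k (-1) (F m) \<in> C2 k VLplus"
proof -
  have "hmode k (-1) (F m) = vsmult (1 / of_int m) (vmode k (E m) (-2) vacuum)"
    using \<open>m > 0\<close> by (auto simp: E_mode_neg2_vacuum vsmult_def)
  then show ?thesis
    using smult_vmode_neg2_in_C2[OF vacuum_in_VLplus E_in_VLplus] by simp
qed

end
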